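(* Let $\mathcal{H}=(V,H,\bm{w})$ be a finite, connected, weighted undirected hypergraph in which every hyperedge has at least two vertices. (i) For any distinct $u,v\in V$ with $\kappa(u,v)>0$, $$d(u,v)\le\frac{2\max_{h\in H}w_h}{\kappa(u,v)}.$$ (ii) If there is $\kappa>0$ with $\kappa(u,v)\ge\kappa$ for every well-transported pair $\{u,v\}$, then $$\mathrm{diam}(\mathcal{H})\le\frac{2\max_{h\in H}w_h}{\kappa}.$$
   Context: A weighted undirected hypergraph $\mathcal{H}=(V,H,\bm{w})$ has a finite vertex set $V$, a finite set $H$ of hyperedges (subsets of $V$), and positive weights $w_h>0$. Distinct vertices $u,v$ are adjacent ($u\sim v$) if some hyperedge contains both; $\Gamma(x)=\{z: z\sim x\}$; $\mathrm{Deg}(x)=\sum_{h\ni x}w_h$. A hyperpath connecting $u$ and $v$ is a sequence of hyperedges $h_1,\dots,h_l$ with $u\in h_1$, $v\in h_l$, $h_j\cap h_{j+1}\neq\emptyset$; $\mathcal{H}$ is connected if all pairs of distinct vertices are connected by hyperpaths. For $u\ne v$, $d(u,v)=\inf_\gamma\sum_{h\in\gamma}w_h$ over hyperpaths connecting $u,v$; $d(u,u)=0$; $\mathrm{diam}(\mathcal{H})=\max_{u,v}d(u,v)$. $W(\mu,\nu)=\inf_\pi\sum_{x,y}\pi(x,y)d(x,y)$ over couplings $\pi$ of probability measures $\mu,\nu$ on $V$. For $\alpha\in[0,1]$: $\mu_x^\alpha(x)=\alpha$, $\mu_x^\alpha(z)=(1-\alpha)\sum_{h'\ni x,z}\frac{1}{|h'|-1}\frac{w_{h'}}{\mathrm{Deg}(x)}$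 for $z\in\Gamma(x)$, $0$ otherwise. For distinct $u,v$: $\kappa_\alpha(u,v)=1-W(\mu_u^\alpha,\mu_v^\alpha)/d(u,v)$, and the Lin–Lu–Yau curvature is $\kappa(u,v)=\lim_{\alpha\to1^-}\kappa_\alpha(u,v)/(1-\alpha)$ (this limit exists in $\mathbb{R}$). A pair $\{u,v\}$ of distinct vertices is well-transported if there is a hyperedge $h$ containing both with $d(u,v)=w_h$. *)

theory Defs
  imports Complex_Main
begin

definition hypergraph :: "'a set \<Rightarrow> 'a set set \<Rightarrow> ('a set \<Rightarrow> real) \<Rightarrow> bool" where
  "hypergraph V H w \<longleftrightarrow> finite V \<and> finite H \<and> (\<forall>h\<in>H. h \<subseteq> V \<and> w h > 0)"

definition hyperpath :: "'a set set \<Rightarrow> 'a set list \<Rightarrow> 'a \<Rightarrow> 'a \<Rightarrow> bool" where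
  "hyperpath H hs u v \<longleftrightarrow> hs \<noteq> [] \<and> set hs \<subseteq> H \<and> u \<in> hd hs \<and> v \<in> last hs \<and>
     (\<forall>j. Suc j < length hs \<longrightarrow> hs ! j \<inter> hs ! Suc j \<noteq> {})"

definition hconnected :: "'a set \<Rightarrow> 'a set set \<Rightarrow> bool" where
  "hconnected V H \<longleftrightarrow> (\<forall>u\<in>V. \<forall>v\<in>V. u \<noteq> v \<longrightarrow> (\<exists>hs. hyperpath H hs u v))"

definition hdist :: "'a set set \<Rightarrow> ('a set \<Rightarrow> real) \<Rightarrow> 'a \<Rightarrow> 'a \<Rightarrow> real" where
  "hdist H w u v = (if u = v then 0
     else Inf {sum_list (map w hs) | hs. hyperpath H hs u v})"

definition hdiam :: "'a set \<Rightarrow> 'a set set \<Rightarrow> ('a set \<Rightarrow> real) \<Rightarrow> real" where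
  "hdiam V H w = Max {hdist H w u v | u v. u \<in> V \<and> v \<in> V}"

definition hDeg :: "'a set set \<Rightarrow> ('a set \<Rightarrow> real) \<Rightarrow> 'a \<Rightarrow> real" where
  "hDeg H w x = (\<Sum>h\<in>{h\<in>H. x \<in> h}. w h)"

definition hmu :: "'a set set \<Rightarrow> ('a set \<Rightarrow> real) \<Rightarrow> real \<Rightarrow> 'a \<Rightarrow> 'a \<Rightarrow> real" where
  "hmu H w \<alpha> x z = (if z = x then \<alpha>
     else (1 - \<alpha>) * (\<Sum>h\<in>{h\<in>H. x \<in> h \<and> z \<in> h}. (1 / (real (card h) - 1)) * (w h / hDeg H w x)))"

definition coupling :: "'a set \<Rightarrow> ('a \<Rightarrow> real) \<Rightarrow> ('a \<Rightarrow> real) \<Rightarrow> ('a \<Rightarrow> 'a \<Rightarrow> real) \<Rightarrow> bool" where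
  "coupling V \<mu> \<nu> \<pi> \<longleftrightarrow> (\<forall>x y. \<pi> x y \<ge> 0) \<and> (\<forall>x y. (x \<notin> V \<or> y \<notin> V) \<longrightarrow> \<pi> x y = 0) \<and>
     (\<forall>x\<in>V. (\<Sum>y\<in>V. \<pi> x y) = \<mu> x) \<and> (\<forall>y\<in>V. (\<Sum>x\<in>V. \<pi> x y) = \<nu> y)"

definition wasserstein :: "'a set \<Rightarrow> 'a set set \<Rightarrow> ('a set \<Rightarrow> real) \<Rightarrow> ('a \<Rightarrow> real) \<Rightarrow> ('a \<Rightarrow> real) \<Rightarrow> real" where
  "wasserstein V H w \<mu> \<nu> = Inf {(\<Sum>x\<in>V. \<Sum>y\<in>V. \<pi> x y * hdist H w x y) | \<pi>. coupling V \<mu> \<nu> \<pi>}"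

definition kappa_alpha :: "'a set \<Rightarrow> 'a set set \<Rightarrow> ('a set \<Rightarrow> real) \<Rightarrow> real \<Rightarrow> 'a \<Rightarrow> 'a \<Rightarrow> real" where
  "kappa_alpha V H w \<alpha> u v = 1 - wasserstein V H w (hmu H w \<alpha> u) (hmu H w \<alpha> v) / hdist H w u v"

definition llycurv :: "'a set \<Rightarrow> 'a set set \<Rightarrow> ('a set \<Rightarrow> real) \<Rightarrow> 'a \<Rightarrow> 'a \<Rightarrow> real" where
  "llycurv V H w u v = Lim (at_left 1) (\<lambda>\<alpha>. kappa_alpha V H w \<alpha> u v / (1 - \<alpha>))"

definition well_transported :: "'a set set \<Rightarrow> ('a set \<Rightarrow> real) \<Rightarrow> 'a \<Rightarrow> 'a \<Rightarrow> bool" where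
  "well_transported H w u v \<longleftrightarrow> u \<noteq> v \<and> (\<exists>h\<in>H. u \<in> h \<and> v \<in> h \<and> hdist H w u v = w h)"

end

theory Submission
  imports Defs "HOL-Analysis.Elementary_Topology"
begin

(*
  Moving the lazy walk measure at u to the one at v costs at least d(u,v) minus the mean
  distance each measure spreads from its centre, and each spreads by at most (1 - alpha) max w.
  Hence kappa_alpha(u,v) d(u,v) <= 2 (1 - alpha) max w, which gives (i) in the limit.
  The limit exists because (d(u,v) - W(mu_u^alpha, mu_v^alpha)) / (1 - alpha) is nondecreasing
  in alpha: mu^b is a mixture of mu^a with the point mass, and W is jointly convex.
  By the triangle inequality for W, kappa(u,v) d(u,v) is superadditive along geodesics.
  Every hyperedge of a geodesic joins a well-transported pair, so kappa(u,v) >= kappa for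
  all pairs, and (ii) follows from (i).
*)

section \<open>Optimal transport on a finite space\<close>

definition prob_on :: "'a set \<Rightarrow> ('a \<Rightarrow> real) \<Rightarrow> bool" where
  "prob_on V \<mu> \<longleftrightarrow> (\<forall>x\<in>V. 0 \<le> \<mu> x) \<and> (\<Sum>x\<in>V. \<mu> x) = 1"

definition transport_cost :: "'a set \<Rightarrow> ('a \<Rightarrow> 'a \<Rightarrow> real) \<Rightarrow> ('a \<Rightarrow> 'a \<Rightarrow> real) \<Rightarrow> real" where
  "transport_cost V c \<pi> = (\<Sum>x\<in>V. \<Sum>y\<in>V. \<pi> x y * c x y)"

definition optimal_transport ::
    "'a set \<Rightarrow> ('a \<Rightarrow> 'a \<Rightarrow> real) \<Rightarrow> ('a \<Rightarrow> real) \<Rightarrow> ('a \<Rightarrow> real) \<Rightarrow> real" where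
  "optimal_transport V c \<mu> \<nu> = Inf {transport_cost V c \<pi> | \<pi>. coupling V \<mu> \<nu> \<pi>}"

text \<open>Gluing lemma: if \<open>\<pi>1\<close> and \<open>\<pi>2\<close> share the marginal \<open>\<nu>\<close>, the three-point plan
  \<open>glue\<close> has them as its \<open>(x,y)\<close>- and \<open>(y,z)\<close>-marginals; the \<open>\<nu> y = 0\<close> branch avoids
  dividing by zero.\<close>
definition glue :: "('a \<Rightarrow> real) \<Rightarrow> ('a \<Rightarrow> 'a \<Rightarrow> real) \<Rightarrow> ('a \<Rightarrow> 'a \<Rightarrow> real) \<Rightarrow> 'a \<Rightarrow> 'a \<Rightarrow> 'a \<Rightarrow> real"
  where "glue \<nu> \<pi>1 \<pi>2 x y z = (if \<nu> y = 0 then 0 else \<pi>1 x y * \<pi>2 y z / \<nu> y)"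

definition glued_plan ::
    "'a set \<Rightarrow> ('a \<Rightarrow> real) \<Rightarrow> ('a \<Rightarrow> 'a \<Rightarrow> real) \<Rightarrow> ('a \<Rightarrow> 'a \<Rightarrow> real) \<Rightarrow> 'a \<Rightarrow> 'a \<Rightarrow> real" where
  "glued_plan V \<nu> \<pi>1 \<pi>2 x z = (if x \<in> V \<and> z \<in> V then \<Sum>y\<in>V. glue \<nu> \<pi>1 \<pi>2 x y z else 0)"

lemma wasserstein_eq_optimal_transport: "wasserstein V H w = optimal_transport V (hdist H w)"
  by (intro ext) (simp add: wasserstein_def optimal_transport_def transport_cost_def)

locale transport_space =
  fixes V :: "'a set" and c :: "'a \<Rightarrow> 'a \<Rightarrow> real"
  assumes finite_space: "finite V"
    and cost_nonneg: "x \<in> V \<Longrightarrow> y \<in> V \<Longrightarrow> 0 \<le> c x y"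
    and cost_triangle: "x \<in> V \<Longrightarrow> y \<in> V \<Longrightarrow> z \<in> V \<Longrightarrow> c x z \<le> c x y + c y z"
begin

lemma coupling_product:
  assumes "prob_on V \<mu>" "prob_on V \<nu>"
  shows "coupling V \<mu> \<nu> (\<lambda>x y. if x \<in> V \<and> y \<in> V then \<mu> x * \<nu> y else 0)"
  using assms unfolding coupling_def prob_on_def
  by (auto simp: sum_distrib_left[symmetric] sum_distrib_right[symmetric])

lemma transport_cost_nonneg: "coupling V \<mu> \<nu> \<pi> \<Longrightarrow> 0 \<le> transport_cost V c \<pi>"
  unfolding transport_cost_def coupling_def by (auto intro!: sum_nonneg mult_nonneg_nonneg cost_nonneg)

lemma optimal_transport_le: "coupling V \<mu> \<nu> \<pi> \<Longrightarrow> optimal_transport V c \<mu> \<nu> \<le> transport_cost V c \<pi>"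
  unfolding optimal_transport_def
  by (rule cInf_lower) (auto intro!: bdd_belowI[of _ 0] transport_cost_nonneg)

lemma optimal_transport_greatest:
  assumes "prob_on V \<mu>" "prob_on V \<nu>" "\<And>\<pi>. coupling V \<mu> \<nu> \<pi> \<Longrightarrow> C \<le> transport_cost V c \<pi>"
  shows "C \<le> optimal_transport V c \<mu> \<nu>"
  unfolding optimal_transport_def using coupling_product[OF assms(1,2)] assms(3)
  by (intro cInf_greatest) auto

lemma coupling_marginal_zero:
  assumes "coupling V \<mu> \<nu> \<pi>"
  shows "y \<in> V \<Longrightarrow> \<nu> y = 0 \<Longrightarrow> \<pi> x y = 0" and "x \<in> V \<Longrightarrow> \<mu> x = 0 \<Longrightarrow> \<pi> x y = 0"
  using assms finite_space unfolding coupling_def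
  by (metis sum_nonneg_eq_0_iff)+

context
  fixes \<mu> \<nu> \<rho> \<pi>1 \<pi>2
  assumes c1: "coupling V \<mu> \<nu> \<pi>1" and c2: "coupling V \<nu> \<rho> \<pi>2"
begin

lemma glue_nonneg: "0 \<le> glue \<nu> \<pi>1 \<pi>2 x y z"
proof (cases "y \<in> V")
  case True
  then have "0 \<le> \<nu> y" using c1 unfolding coupling_def by (metis sum_nonneg)
  then show ?thesis using c1 c2 unfolding glue_def coupling_def by (auto simp: less_le)
qed (use c1 in \<open>simp add: glue_def coupling_def\<close>)

lemma sum_glue_last: "y \<in> V \<Longrightarrow> (\<Sum>z\<in>V. glue \<nu> \<pi>1 \<pi>2 x y z) = \<pi>1 x y"
proof (cases "\<nu> y = 0")
  case False
  assume "y \<in> V"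
  have "(\<Sum>z\<in>V. glue \<nu> \<pi>1 \<pi>2 x y z) = \<pi>1 x y * (\<Sum>z\<in>V. \<pi>2 y z) / \<nu> y"
    using False by (simp add: glue_def sum_distrib_left sum_divide_distrib)
  then show ?thesis using c2 \<open>y \<in> V\<close> False by (simp add: coupling_def)
qed (simp add: glue_def coupling_marginal_zero(1)[OF c1])

lemma sum_glue_first: "y \<in> V \<Longrightarrow> (\<Sum>x\<in>V. glue \<nu> \<pi>1 \<pi>2 x y z) = \<pi>2 y z"
proof (cases "\<nu> y = 0")
  case False
  assume "y \<in> V"
  have "(\<Sum>x\<in>V. glue \<nu> \<pi>1 \<pi>2 x y z) = (\<Sum>x\<in>V. \<pi>1 x y) * \<pi>2 y z / \<nu> y"
    using False by (simp add: glue_def sum_distrib_right sum_divide_distrib)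
  then show ?thesis using c1 \<open>y \<in> V\<close> False by (simp add: coupling_def)
qed (simp add: glue_def coupling_marginal_zero(2)[OF c2])

lemma coupling_glued_plan: "coupling V \<mu> \<rho> (glued_plan V \<nu> \<pi>1 \<pi>2)"
  unfolding coupling_def
proof (intro conjI ballI allI impI)
  fix x z
  show "0 \<le> glued_plan V \<nu> \<pi>1 \<pi>2 x z" by (auto simp: glued_plan_def intro: sum_nonneg glue_nonneg)
  show "x \<notin> V \<or> z \<notin> V \<Longrightarrow> glued_plan V \<nu> \<pi>1 \<pi>2 x z = 0" by (auto simp: glued_plan_def)
next
  fix x assume "x \<in> V"
  then have "(\<Sum>z\<in>V. glued_plan V \<nu> \<pi>1 \<pi>2 x z) = (\<Sum>z\<in>V. \<Sum>y\<in>V. glue \<nu> \<pi>1 \<pi>2 x y z)"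
    by (simp add: glued_plan_def)
  also have "\<dots> = (\<Sum>y\<in>V. \<Sum>z\<in>V. glue \<nu> \<pi>1 \<pi>2 x y z)" by (rule sum.swap)
  also have "\<dots> = \<mu> x" using c1 \<open>x \<in> V\<close> by (simp add: sum_glue_last coupling_def)
  finally show "(\<Sum>z\<in>V. glued_plan V \<nu> \<pi>1 \<pi>2 x z) = \<mu> x" .
next
  fix z assume "z \<in> V"
  then have "(\<Sum>x\<in>V. glued_plan V \<nu> \<pi>1 \<pi>2 x z) = (\<Sum>x\<in>V. \<Sum>y\<in>V. glue \<nu> \<pi>1 \<pi>2 x y z)"
    by (simp add: glued_plan_def)
  also have "\<dots> = (\<Sum>y\<in>V. \<Sum>x\<in>V. glue \<nu> \<pi>1 \<pi>2 x y z)" by (rule sum.swap)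
  also have "\<dots> = \<rho> z" using c2 \<open>z \<in> V\<close> by (simp add: sum_glue_first coupling_def)
  finally show "(\<Sum>x\<in>V. glued_plan V \<nu> \<pi>1 \<pi>2 x z) = \<rho> z" .
qed

lemma transport_cost_glued_plan_le:
  "transport_cost V c (glued_plan V \<nu> \<pi>1 \<pi>2) \<le> transport_cost V c \<pi>1 + transport_cost V c \<pi>2"
proof -
  let ?g = "glue \<nu> \<pi>1 \<pi>2"
  have first_leg: "(\<Sum>x\<in>V. \<Sum>z\<in>V. \<Sum>y\<in>V. ?g x y z * c x y) = transport_cost V c \<pi>1"
  proof -
    have "(\<Sum>x\<in>V. \<Sum>z\<in>V. \<Sum>y\<in>V. ?g x y z * c x y) = (\<Sum>x\<in>V. \<Sum>y\<in>V. \<Sum>z\<in>V. ?g x y z * c x y)"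
      by (intro sum.cong refl sum.swap)
    then show ?thesis by (simp add: transport_cost_def sum_glue_last flip: sum_distrib_right)
  qed
  have second_leg: "(\<Sum>x\<in>V. \<Sum>z\<in>V. \<Sum>y\<in>V. ?g x y z * c y z) = transport_cost V c \<pi>2"
  proof -
    have "(\<Sum>x\<in>V. \<Sum>z\<in>V. \<Sum>y\<in>V. ?g x y z * c y z) = (\<Sum>z\<in>V. \<Sum>x\<in>V. \<Sum>y\<in>V. ?g x y z * c y z)"
      by (rule sum.swap)
    also have "\<dots> = (\<Sum>z\<in>V. \<Sum>y\<in>V. \<Sum>x\<in>V. ?g x y z * c y z)"
      by (intro sum.cong refl sum.swap)
    also have "\<dots> = (\<Sum>y\<in>V. \<Sum>z\<in>V. \<Sum>x\<in>V. ?g x y z * c y z)"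
      by (rule sum.swap)
    finally show ?thesis by (simp add: transport_cost_def sum_glue_first flip: sum_distrib_right)
  qed
  have "transport_cost V c (glued_plan V \<nu> \<pi>1 \<pi>2) = (\<Sum>x\<in>V. \<Sum>z\<in>V. \<Sum>y\<in>V. ?g x y z * c x z)"
    unfolding transport_cost_def glued_plan_def by (simp add: sum_distrib_right)
  also have "\<dots> \<le> (\<Sum>x\<in>V. \<Sum>z\<in>V. \<Sum>y\<in>V. ?g x y z * c x y + ?g x y z * c y z)"
    by (intro sum_mono) (simp add: distrib_left[symmetric] mult_left_mono glue_nonneg cost_triangle)
  also have "\<dots> = transport_cost V c \<pi>1 + transport_cost V c \<pi>2"
    by (simp add: sum.distrib first_leg second_leg)
  finally show ?thesis .
qed

end

lemma optimal_transport_triangle: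
  assumes "prob_on V \<mu>" "prob_on V \<nu>" "prob_on V \<rho>"
  shows "optimal_transport V c \<mu> \<rho> \<le> optimal_transport V c \<mu> \<nu> + optimal_transport V c \<nu> \<rho>"
proof -
  have "optimal_transport V c \<mu> \<rho> - optimal_transport V c \<nu> \<rho> \<le> optimal_transport V c \<mu> \<nu>"
  proof (rule optimal_transport_greatest[OF assms(1,2)])
    fix \<pi>1 assume c1: "coupling V \<mu> \<nu> \<pi>1"
    have "optimal_transport V c \<mu> \<rho> - transport_cost V c \<pi>1 \<le> optimal_transport V c \<nu> \<rho>"
    proof (rule optimal_transport_greatest[OF assms(2,3)])
      fix \<pi>2 assume c2: "coupling V \<nu> \<rho> \<pi>2"
      have "optimal_transport V c \<mu> \<rho> \<le> transport_cost V c (glued_plan V \<nu> \<pi>1 \<pi>2)"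
        by (rule optimal_transport_le[OF coupling_glued_plan[OF c1 c2]])
      with transport_cost_glued_plan_le[OF c1 c2]
      show "optimal_transport V c \<mu> \<rho> - transport_cost V c \<pi>1 \<le> transport_cost V c \<pi>2" by simp
    qed
    then show "optimal_transport V c \<mu> \<rho> - optimal_transport V c \<nu> \<rho> \<le> transport_cost V c \<pi>1"
      by simp
  qed
  then show ?thesis by simp
qed

lemma optimal_transport_mixture_le:
  assumes "prob_on V \<mu>" "prob_on V \<nu>" "prob_on V \<mu>'" "prob_on V \<nu>'" and t: "0 < t" "t < 1"
  shows "optimal_transport V c (\<lambda>x. t * \<mu> x + (1 - t) * \<mu>' x) (\<lambda>y. t * \<nu> y + (1 - t) * \<nu>' y)
    \<le> t * optimal_transport V c \<mu> \<nu> + (1 - t) * optimal_transport V c \<mu>' \<nu>'"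
    (is "?W \<le> _")
proof -
  have "(?W - t * optimal_transport V c \<mu> \<nu>) / (1 - t) \<le> optimal_transport V c \<mu>' \<nu>'"
  proof (rule optimal_transport_greatest[OF assms(3,4)])
    fix \<pi>' assume c': "coupling V \<mu>' \<nu>' \<pi>'"
    have "(?W - (1 - t) * transport_cost V c \<pi>') / t \<le> optimal_transport V c \<mu> \<nu>"
    proof (rule optimal_transport_greatest[OF assms(1,2)])
      fix \<pi> assume c: "coupling V \<mu> \<nu> \<pi>"
      let ?\<pi> = "\<lambda>x y. t * \<pi> x y + (1 - t) * \<pi>' x y"
      have "coupling V (\<lambda>x. t * \<mu> x + (1 - t) * \<mu>' x) (\<lambda>y. t * \<nu> y + (1 - t) * \<nu>' y) ?\<pi>"
        using c c' t unfolding coupling_def by (auto simp: sum.distrib sum_distrib_left[symmetric])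
      then have "?W \<le> transport_cost V c ?\<pi>" by (rule optimal_transport_le)
      also have "\<dots> = t * transport_cost V c \<pi> + (1 - t) * transport_cost V c \<pi>'"
        unfolding transport_cost_def by (simp add: distrib_right sum.distrib sum_distrib_left mult.assoc)
      finally have "?W \<le> t * transport_cost V c \<pi> + (1 - t) * transport_cost V c \<pi>'" .
      then show "(?W - (1 - t) * transport_cost V c \<pi>') / t \<le> transport_cost V c \<pi>"
        using t by (simp add: field_simps)
    qed
    then show "(?W - t * optimal_transport V c \<mu> \<nu>) / (1 - t) \<le> transport_cost V c \<pi>'"
      using t by (simp add: field_simps)
  qed
  then show ?thesis using t by (simp add: field_simps)
qed

lemma prob_on_point_mass: "u \<in> V \<Longrightarrow> prob_on V (\<lambda>x. if x = u then 1 else 0)"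
  using finite_space by (simp add: prob_on_def)

lemma optimal_transport_point_mass_le:
  assumes "u \<in> V" "v \<in> V"
  shows "optimal_transport V c (\<lambda>x. if x = u then 1 else 0) (\<lambda>y. if y = v then 1 else 0) \<le> c u v"
proof -
  let ?\<pi> = "\<lambda>x y. if x = u \<and> y = v then 1 else 0"
  have "coupling V (\<lambda>x. if x = u then 1 else 0) (\<lambda>y. if y = v then 1 else 0) ?\<pi>"
    using assms finite_space by (auto simp: coupling_def)
  then have "optimal_transport V c (\<lambda>x. if x = u then 1 else 0) (\<lambda>y. if y = v then 1 else 0)
      \<le> transport_cost V c ?\<pi>"
    by (rule optimal_transport_le)
  moreover have "?\<pi> x y * c x y = (if y = v then if x = u then c u v else 0 else 0)" for x y
    by auto
  then have "transport_cost V c ?\<pi> = c u v"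
    using assms finite_space by (simp add: transport_cost_def)
  ultimately show ?thesis by simp
qed

text \<open>Test the plans against the 1-Lipschitz function \<open>c u\<close>.\<close>
lemma optimal_transport_ge_displacement:
  assumes "prob_on V \<mu>" "prob_on V \<nu>" and u: "u \<in> V" and v: "v \<in> V"
  shows "c u v - (\<Sum>x\<in>V. \<mu> x * c u x) - (\<Sum>y\<in>V. \<nu> y * c y v) \<le> optimal_transport V c \<mu> \<nu>"
proof (rule optimal_transport_greatest[OF assms(1,2)])
  fix \<pi> assume "coupling V \<mu> \<nu> \<pi>"
  then have row: "x \<in> V \<Longrightarrow> (\<Sum>y\<in>V. \<pi> x y) = \<mu> x"
    and column: "y \<in> V \<Longrightarrow> (\<Sum>x\<in>V. \<pi> x y) = \<nu> y"
    and nonneg: "0 \<le> \<pi> x y" for x y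
    unfolding coupling_def by auto
  have "c u v - (\<Sum>y\<in>V. \<nu> y * c y v) = (\<Sum>y\<in>V. \<nu> y * (c u v - c y v))"
    using \<open>prob_on V \<nu>\<close> by (simp add: prob_on_def algebra_simps sum_subtractf sum_distrib_right[symmetric])
  also have "\<dots> \<le> (\<Sum>y\<in>V. \<nu> y * c u y)"
    using \<open>prob_on V \<nu>\<close> cost_triangle[OF u _ v]
    by (intro sum_mono mult_left_mono) (auto simp: prob_on_def algebra_simps)
  also have "\<dots> = (\<Sum>y\<in>V. \<Sum>x\<in>V. \<pi> x y * c u y)"
    by (simp add: column flip: sum_distrib_right)
  also have "\<dots> = (\<Sum>x\<in>V. \<Sum>y\<in>V. \<pi> x y * c u y)"
    by (rule sum.swap)
  also have "\<dots> \<le> (\<Sum>x\<in>V. \<Sum>y\<in>V. \<pi> x y * c u x + \<pi> x y * c x y)"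
    using cost_triangle[OF u] nonneg
    by (intro sum_mono) (simp add: distrib_left[symmetric] mult_left_mono)
  also have "\<dots> = (\<Sum>x\<in>V. \<mu> x * c u x) + transport_cost V c \<pi>"
    by (simp add: row transport_cost_def sum.distrib flip: sum_distrib_right)
  finally show "c u v - (\<Sum>x\<in>V. \<mu> x * c u x) - (\<Sum>y\<in>V. \<nu> y * c y v) \<le> transport_cost V c \<pi>"
    by simp
qed

end

section \<open>Hyperpaths and the hypergraph distance\<close>

lemma hyperpath_append:
  assumes "hyperpath H p x y" "hyperpath H q y z"
  shows "hyperpath H (p @ q) x z"
  unfolding hyperpath_def
proof (intro conjI allI impI)
  have p: "p \<noteq> []" "set p \<subseteq> H" "x \<in> hd p" "y \<in> last p"
    and q: "q \<noteq> []" "set q \<subseteq> H" "y \<in> hd q" "z \<in> last q"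
    using assms unfolding hyperpath_def by auto
  then show "p @ q \<noteq> []" "set (p @ q) \<subseteq> H" "x \<in> hd (p @ q)" "z \<in> last (p @ q)" by auto
  fix j assume j: "Suc j < length (p @ q)"
  consider "Suc j < length p" | "Suc j = length p" | "length p \<le> j" by linarith
  then show "(p @ q) ! j \<inter> (p @ q) ! Suc j \<noteq> {}"
  proof cases
    case 1
    then show ?thesis using assms(1) unfolding hyperpath_def by (simp add: nth_append)
  next
    case 2
    then have "j = length p - 1" by simp
    with 2 have "(p @ q) ! j = last p" "(p @ q) ! Suc j = hd q"
      using p(1) q(1) by (simp_all add: nth_append last_conv_nth hd_conv_nth)
    then show ?thesis using p q by auto
  next
    case 3
    then obtain k where "j = length p + k" using le_Suc_ex by blast
    then show ?thesis using assms(2) j unfolding hyperpath_def by (simp add: nth_append)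
  qed
qed

lemma hyperpath_Cons:
  assumes "hyperpath H (h # hs) u v" "hs \<noteq> []"
  obtains y where "y \<in> h" "hyperpath H hs y v"
proof -
  have "h \<inter> hd hs \<noteq> {}"
    using assms unfolding hyperpath_def by (metis length_Cons length_greater_0_conv
        Suc_less_eq nth_Cons_0 nth_Cons_Suc hd_conv_nth)
  then obtain y where "y \<in> h" "y \<in> hd hs" by blast
  moreover from \<open>y \<in> hd hs\<close> have "hyperpath H hs y v"
    using assms unfolding hyperpath_def by (auto simp: nth_Cons_Suc) (metis Suc_less_eq length_Cons nth_Cons_Suc)
  ultimately show thesis using that by blast
qed

lemma hdist_self [simp]: "hdist H w u u = 0"
  by (simp add: hdist_def)

locale connected_hypergraph =
  fixes V :: "'a set" and H :: "'a set set" and w :: "'a set \<Rightarrow> real"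
  assumes hypergraph: "hypergraph V H w" and connected: "hconnected V H"
begin

lemma finite_vertices: "finite V" and finite_edges: "finite H"
  and edge_subset: "h \<in> H \<Longrightarrow> h \<subseteq> V" and weight_pos: "h \<in> H \<Longrightarrow> 0 < w h"
  using hypergraph unfolding hypergraph_def by auto

lemma path_weight_nonneg: "set hs \<subseteq> H \<Longrightarrow> 0 \<le> sum_list (map w hs)"
  by (induction hs) (auto intro: add_nonneg_nonneg less_imp_le weight_pos)

lemma path_weight_pos: "hyperpath H hs u v \<Longrightarrow> 0 < sum_list (map w hs)"
  unfolding hyperpath_def by (cases hs) (auto intro: add_pos_nonneg weight_pos path_weight_nonneg)

lemma path_weight_ge_length:
  "set hs \<subseteq> H \<Longrightarrow> real (length hs) * Min (w ` H) \<le> sum_list (map w hs)"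
  using finite_edges by (induction hs) (auto simp: algebra_simps intro: add_mono)

lemma hdist_le_path_weight: "hyperpath H hs u v \<Longrightarrow> hdist H w u v \<le> sum_list (map w hs)"
  unfolding hdist_def
  by (auto intro!: cInf_lower bdd_belowI[of _ 0] path_weight_nonneg path_weight_pos[THEN less_imp_le]
      simp: hyperpath_def)

lemma hdist_le_weight: "h \<in> H \<Longrightarrow> u \<in> h \<Longrightarrow> v \<in> h \<Longrightarrow> hdist H w u v \<le> w h"
  using hdist_le_path_weight[of "[h]" u v] by (simp add: hyperpath_def)

text \<open>Paths of weight at most that of a fixed path have bounded length, so only finitely many
  path weights compete for the infimum defining the distance.\<close>
lemma hdist_attained:
  assumes "u \<in> V" "v \<in> V" "u \<noteq> v"
  obtains hs where "hyperpath H hs u v" "sum_list (map w hs) = hdist H w u v"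
proof -
  let ?wt = "\<lambda>hs. sum_list (map w hs)"
  obtain p where p: "hyperpath H p u v" using connected assms unfolding hconnected_def by blast
  define m where "m = Min (w ` H)"
  have "H \<noteq> {}" using p unfolding hyperpath_def by auto
  then have "0 < m" unfolding m_def using finite_edges weight_pos by simp
  define S where "S = {hs. set hs \<subseteq> H \<and> length hs \<le> nat \<lceil>?wt p / m\<rceil> \<and> hyperpath H hs u v}"
  have short: "hs \<in> S" if "hyperpath H hs u v" "?wt hs \<le> ?wt p" for hs
  proof -
    have "set hs \<subseteq> H" using that(1) unfolding hyperpath_def by simp
    with path_weight_ge_length have "real (length hs) * m \<le> ?wt p"
      unfolding m_def using that(2) by (meson order_trans)
    then have "real (length hs) \<le> ?wt p / m" using \<open>0 < m\<close> by (simp add: le_divide_eq)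
    then have "length hs \<le> nat \<lceil>?wt p / m\<rceil>" by linarith
    then show ?thesis using that(1) \<open>set hs \<subseteq> H\<close> unfolding S_def by simp
  qed
  have "finite S"
    using finite_lists_length_le[OF finite_edges] unfolding S_def by (rule rev_finite_subset) auto
  have "p \<in> S" using short p by simp
  then have "S \<noteq> {}" by blast
  define q where "q = arg_min_on ?wt S"
  have "q \<in> S" unfolding q_def using arg_min_if_finite(1)[OF \<open>finite S\<close> \<open>S \<noteq> {}\<close>] .
  have q_min: "?wt q \<le> ?wt hs" if "hs \<in> S" for hs
    unfolding q_def using arg_min_least[OF \<open>finite S\<close> \<open>S \<noteq> {}\<close> that] .
  have q: "hyperpath H q u v" using \<open>q \<in> S\<close> unfolding S_def by simp
  have "?wt q \<le> ?wt hs" if "hyperpath H hs u v" for hs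
    using q_min[OF short[OF that]] q_min[OF \<open>p \<in> S\<close>] by (cases "?wt hs \<le> ?wt p") auto
  then have "hdist H w u v = ?wt q"
    unfolding hdist_def using \<open>u \<noteq> v\<close> q by (auto intro!: cInf_eq_minimum)
  with q show thesis by (intro that) auto
qed

lemma hdist_pos: "u \<in> V \<Longrightarrow> v \<in> V \<Longrightarrow> u \<noteq> v \<Longrightarrow> 0 < hdist H w u v"
  by (metis hdist_attained path_weight_pos)

lemma hdist_nonneg: "u \<in> V \<Longrightarrow> v \<in> V \<Longrightarrow> 0 \<le> hdist H w u v"
  using hdist_pos by (cases "u = v") (auto simp: hdist_def less_imp_le)

lemma hdist_triangle:
  assumes "x \<in> V" "y \<in> V" "z \<in> V"
  shows "hdist H w x z \<le> hdist H w x y + hdist H w y z"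
proof (cases "x = y \<or> y = z")
  case True
  then show ?thesis using hdist_nonneg assms by (auto simp: hdist_def)
next
  case False
  then obtain p q where "hyperpath H p x y" "sum_list (map w p) = hdist H w x y"
    and "hyperpath H q y z" "sum_list (map w q) = hdist H w y z"
    using hdist_attained assms by metis
  then show ?thesis using hdist_le_path_weight[OF hyperpath_append] by fastforce
qed

sublocale transport_space V "hdist H w"
  using finite_vertices hdist_nonneg hdist_triangle by unfold_locales

lemma geodesic_Cons:
  assumes path: "hyperpath H (h # hs) u v" and "hs \<noteq> []"
    and geodesic: "sum_list (map w (h # hs)) = hdist H w u v"
  obtains y where "y \<in> h" "y \<in> V" "y \<noteq> u" "y \<noteq> v" "hyperpath H hs y v"
    "hdist H w u y = w h" "hdist H w y v = sum_list (map w hs)"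
proof -
  obtain y where "y \<in> h" and rest: "hyperpath H hs y v" using hyperpath_Cons[OF assms(1,2)] .
  have "h \<in> H" "u \<in> h" using path unfolding hyperpath_def by auto
  then have "y \<in> V" "u \<in> V" using \<open>y \<in> h\<close> edge_subset by auto
  have "v \<in> V" using rest edge_subset unfolding hyperpath_def by (metis last_in_set subsetD)
  have uy: "hdist H w u y \<le> w h" using \<open>h \<in> H\<close> \<open>u \<in> h\<close> \<open>y \<in> h\<close> by (rule hdist_le_weight)
  have yv: "hdist H w y v \<le> sum_list (map w hs)" using rest by (rule hdist_le_path_weight)
  have "hdist H w u v \<le> hdist H w u y + hdist H w y v"
    using \<open>u \<in> V\<close> \<open>y \<in> V\<close> \<open>v \<in> V\<close> by (rule hdist_triangle)
  then have "hdist H w u y = w h" "hdist H w y v = sum_list (map w hs)"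
    using uy yv geodesic by auto
  moreover have "y \<noteq> u" "y \<noteq> v"
    using calculation weight_pos[OF \<open>h \<in> H\<close>] path_weight_pos[OF rest] by (auto simp: hdist_def)
  ultimately show thesis using that \<open>y \<in> h\<close> \<open>y \<in> V\<close> rest by blast
qed

lemma hdiam_le:
  assumes "V \<noteq> {}" "\<And>u v. u \<in> V \<Longrightarrow> v \<in> V \<Longrightarrow> hdist H w u v \<le> B"
  shows "hdiam V H w \<le> B"
proof -
  have "{hdist H w u v | u v. u \<in> V \<and> v \<in> V} = (\<lambda>(u, v). hdist H w u v) ` (V \<times> V)" by auto
  then show ?thesis unfolding hdiam_def using assms finite_vertices by (auto simp: Max_le_iff)
qed

end

section \<open>Lazy random walks\<close>

locale nondegenerate_hypergraph = connected_hypergraph +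
  assumes edges_nonempty: "H \<noteq> {}" and edge_card: "h \<in> H \<Longrightarrow> 2 \<le> card h"
begin

lemma weight_le_max_weight: "h \<in> H \<Longrightarrow> w h \<le> Max (w ` H)"
  using finite_edges by simp

lemma max_weight_pos: "0 < Max (w ` H)"
  using edges_nonempty weight_pos weight_le_max_weight by (meson ex_in_conv less_le_trans)

lemma vertex_in_edge:
  assumes "x \<in> V"
  obtains h where "h \<in> H" "x \<in> h"
proof -
  obtain h where "h \<in> H" using edges_nonempty by blast
  then have "\<not> h \<subseteq> {x}" using edge_card[of h] card_mono[of "{x}" h] by auto
  then obtain y where "y \<in> V" "y \<noteq> x" using \<open>h \<in> H\<close> edge_subset by blast
  then obtain hs where "hyperpath H hs x y"
    using connected assms unfolding hconnected_def by (metis \<open>y \<noteq> x\<close>)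
  then show thesis using that unfolding hyperpath_def by (metis hd_in_set subsetD)
qed

lemma hDeg_pos: "x \<in> V \<Longrightarrow> 0 < hDeg H w x"
proof -
  assume "x \<in> V"
  then obtain h where "h \<in> H" "x \<in> h" by (rule vertex_in_edge)
  then have "w h \<le> hDeg H w x"
    unfolding hDeg_def using finite_edges weight_pos by (intro member_le_sum) (auto intro: less_imp_le)
  then show ?thesis using weight_pos[OF \<open>h \<in> H\<close>] by simp
qed

definition walk_kernel :: "'a \<Rightarrow> 'a \<Rightarrow> real" where
  "walk_kernel x z = (if z = x then 0
     else \<Sum>h\<in>{h\<in>H. x \<in> h \<and> z \<in> h}. w h / ((real (card h) - 1) * hDeg H w x))"

lemma walk_kernel_self [simp]: "walk_kernel x x = 0"
  by (simp add: walk_kernel_def)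

lemma step_weight_nonneg: "h \<in> H \<Longrightarrow> x \<in> V \<Longrightarrow> 0 \<le> w h / ((real (card h) - 1) * hDeg H w x)"
proof -
  assume "h \<in> H" "x \<in> V"
  then have "2 \<le> real (card h)" using edge_card by simp
  then show ?thesis using weight_pos[OF \<open>h \<in> H\<close>] hDeg_pos[OF \<open>x \<in> V\<close>] by simp
qed

lemma hmu_eq: "hmu H w \<alpha> x z = \<alpha> * (if z = x then 1 else 0) + (1 - \<alpha>) * walk_kernel x z"
  unfolding hmu_def walk_kernel_def by simp

lemma walk_kernel_nonneg: "x \<in> V \<Longrightarrow> 0 \<le> walk_kernel x z"
  unfolding walk_kernel_def by (auto intro!: sum_nonneg step_weight_nonneg)

lemma walk_kernel_sum:
  assumes "x \<in> V"
  shows "(\<Sum>z\<in>V. walk_kernel x z) = 1"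
proof -
  let ?p = "\<lambda>h. w h / ((real (card h) - 1) * hDeg H w x)"
  have "(\<Sum>z\<in>V. walk_kernel x z) = (\<Sum>z\<in>V - {x}. \<Sum>h\<in>{h\<in>H. x \<in> h \<and> z \<in> h}. ?p h)"
    using finite_vertices assms by (simp add: walk_kernel_def sum.remove[of V x])
  also have "\<dots> = (\<Sum>h\<in>H. \<Sum>z\<in>{z\<in>V - {x}. x \<in> h \<and> z \<in> h}. ?p h)"
    using finite_vertices finite_edges by (intro sum.swap_restrict) auto
  also have "\<dots> = (\<Sum>h\<in>H. if x \<in> h then w h / hDeg H w x else 0)"
  proof (rule sum.cong[OF refl])
    fix h assume "h \<in> H"
    show "(\<Sum>z\<in>{z\<in>V - {x}. x \<in> h \<and> z \<in> h}. ?p h) = (if x \<in> h then w h / hDeg H w x else 0)"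
    proof (cases "x \<in> h")
      case True
      then have "{z\<in>V - {x}. x \<in> h \<and> z \<in> h} = h - {x}" using \<open>h \<in> H\<close> edge_subset by auto
      moreover have "real (card (h - {x})) = real (card h) - 1" "real (card h) - 1 \<noteq> 0"
        using True \<open>h \<in> H\<close> edge_card[of h] by (auto simp: of_nat_diff)
      ultimately show ?thesis using True by simp
    qed simp
  qed
  also have "\<dots> = (\<Sum>h\<in>{h\<in>H. x \<in> h}. w h / hDeg H w x)"
    using finite_edges by (simp add: sum.inter_filter)
  also have "\<dots> = 1"
    using hDeg_pos[OF assms] by (simp add: hDeg_def flip: sum_divide_distrib)
  finally show ?thesis .
qed

lemma walk_kernel_expectation_le:
  assumes "x \<in> V" and bound: "\<And>h z. h \<in> H \<Longrightarrow> x \<in> h \<Longrightarrow> z \<in> h \<Longrightarrow> f z \<le> B"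
  shows "(\<Sum>z\<in>V. walk_kernel x z * f z) \<le> B"
proof -
  have "walk_kernel x z * f z \<le> walk_kernel x z * B" for z
  proof (cases "z = x")
    case False
    show ?thesis
      unfolding walk_kernel_def if_not_P[OF False] sum_distrib_right
      using \<open>x \<in> V\<close> by (intro sum_mono mult_left_mono) (auto intro: bound step_weight_nonneg)
  qed simp
  then have "(\<Sum>z\<in>V. walk_kernel x z * f z) \<le> (\<Sum>z\<in>V. walk_kernel x z) * B"
    by (simp add: sum_distrib_right sum_mono)
  then show ?thesis using walk_kernel_sum[OF assms(1)] by simp
qed

lemma prob_on_hmu: "x \<in> V \<Longrightarrow> 0 \<le> \<alpha> \<Longrightarrow> \<alpha> \<le> 1 \<Longrightarrow> prob_on V (hmu H w \<alpha> x)"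
  unfolding prob_on_def hmu_eq
  using finite_vertices walk_kernel_nonneg walk_kernel_sum
  by (simp add: sum.distrib sum_distrib_left[symmetric])

lemma hmu_expectation_le:
  assumes "x \<in> V" "\<alpha> \<le> 1" "f x = 0" "\<And>h z. h \<in> H \<Longrightarrow> x \<in> h \<Longrightarrow> z \<in> h \<Longrightarrow> f z \<le> B"
  shows "(\<Sum>z\<in>V. hmu H w \<alpha> x z * f z) \<le> (1 - \<alpha>) * B"
proof -
  have "hmu H w \<alpha> x z * f z = (1 - \<alpha>) * (walk_kernel x z * f z)" for z
    using assms(3) by (cases "z = x") (simp_all add: hmu_eq)
  then have "(\<Sum>z\<in>V. hmu H w \<alpha> x z * f z) = (\<Sum>z\<in>V. (1 - \<alpha>) * (walk_kernel x z * f z))"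
    by (intro sum.cong) auto
  also have "\<dots> = (1 - \<alpha>) * (\<Sum>z\<in>V. walk_kernel x z * f z)"
    by (simp add: sum_distrib_left)
  also have "\<dots> \<le> (1 - \<alpha>) * B"
    using assms walk_kernel_expectation_le by (simp add: mult_left_mono)
  finally show ?thesis .
qed

lemma hmu_mixture:
  assumes "1 - b = t * (1 - a)"
  shows "hmu H w b x = (\<lambda>z. t * hmu H w a x z + (1 - t) * (if z = x then 1 else 0))"
proof -
  from assms have b: "b = 1 - t * (1 - a)" by simp
  show ?thesis unfolding b by (auto simp: fun_eq_iff hmu_eq algebra_simps)
qed

lemma hdist_le_max_weight: "h \<in> H \<Longrightarrow> x \<in> h \<Longrightarrow> z \<in> h \<Longrightarrow> hdist H w x z \<le> Max (w ` H)"
  using hdist_le_weight weight_le_max_weight by (meson order_trans)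

abbreviation lazy_transport :: "real \<Rightarrow> 'a \<Rightarrow> 'a \<Rightarrow> real" where
  "lazy_transport \<alpha> u v \<equiv> wasserstein V H w (hmu H w \<alpha> u) (hmu H w \<alpha> v)"

lemma lazy_transport_lower_bound:
  assumes "u \<in> V" "v \<in> V" "0 \<le> \<alpha>" "\<alpha> \<le> 1"
  shows "hdist H w u v - 2 * (1 - \<alpha>) * Max (w ` H) \<le> lazy_transport \<alpha> u v"
proof -
  have "(\<Sum>z\<in>V. hmu H w \<alpha> u z * hdist H w u z) \<le> (1 - \<alpha>) * Max (w ` H)"
    "(\<Sum>z\<in>V. hmu H w \<alpha> v z * hdist H w z v) \<le> (1 - \<alpha>) * Max (w ` H)"
    using assms by (auto intro!: hmu_expectation_le intro: hdist_le_max_weight)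
  moreover have "2 * (1 - \<alpha>) * Max (w ` H) = (1 - \<alpha>) * Max (w ` H) + (1 - \<alpha>) * Max (w ` H)"
    by simp
  ultimately show ?thesis
    using optimal_transport_ge_displacement[OF prob_on_hmu[OF \<open>u \<in> V\<close> assms(3,4)]
        prob_on_hmu[OF \<open>v \<in> V\<close> assms(3,4)] \<open>u \<in> V\<close> \<open>v \<in> V\<close>]
    unfolding wasserstein_eq_optimal_transport by linarith
qed

lemma lazy_transport_convex:
  assumes "u \<in> V" "v \<in> V" "0 \<le> a" "a \<le> 1" "0 < t" "t < 1" "1 - b = t * (1 - a)"
  shows "lazy_transport b u v \<le> t * lazy_transport a u v + (1 - t) * hdist H w u v"
proof -
  let ?point = "\<lambda>x z. if z = x then 1 else (0::real)"
  have "lazy_transport b u v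
      \<le> t * lazy_transport a u v + (1 - t) * optimal_transport V (hdist H w) (?point u) (?point v)"
    unfolding hmu_mixture[OF assms(7)] wasserstein_eq_optimal_transport
    using assms by (intro optimal_transport_mixture_le prob_on_hmu prob_on_point_mass)
  also have "\<dots> \<le> t * lazy_transport a u v + (1 - t) * hdist H w u v"
    using assms optimal_transport_point_mass_le[of u v] by simp
  finally show ?thesis .
qed

end

section \<open>Lin--Lu--Yau curvature\<close>

lemma eventually_laziness: "eventually (\<lambda>\<alpha>. 0 \<le> \<alpha> \<and> \<alpha> < 1) (at_left (1::real))"
  using eventually_at_left_real[OF zero_less_one] by (rule eventually_mono) auto

context nondegenerate_hypergraph
begin

definition transport_gain :: "real \<Rightarrow> 'a \<Rightarrow> 'a \<Rightarrow> real" where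
  "transport_gain \<alpha> u v = (hdist H w u v - lazy_transport \<alpha> u v) / (1 - \<alpha>)"

lemma kappa_alpha_div_eq:
  assumes "u \<in> V" "v \<in> V" "u \<noteq> v"
  shows "kappa_alpha V H w \<alpha> u v / (1 - \<alpha>) = transport_gain \<alpha> u v / hdist H w u v"
proof -
  have "kappa_alpha V H w \<alpha> u v = (hdist H w u v - lazy_transport \<alpha> u v) / hdist H w u v"
    using hdist_pos[OF assms] by (simp add: kappa_alpha_def diff_divide_distrib)
  then show ?thesis by (simp add: transport_gain_def ac_simps)
qed

lemma transport_gain_le:
  assumes "u \<in> V" "v \<in> V" "0 \<le> \<alpha>" "\<alpha> < 1"
  shows "transport_gain \<alpha> u v \<le> 2 * Max (w ` H)"
  using lazy_transport_lower_bound[of u v \<alpha>] assms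
  by (simp add: transport_gain_def pos_divide_le_eq algebra_simps)

lemma transport_gain_mono:
  assumes "u \<in> V" "v \<in> V" "0 \<le> a" "a \<le> b" "b < 1"
  shows "transport_gain a u v \<le> transport_gain b u v"
proof (cases "a = b")
  case False
  define t where "t = (1 - b) / (1 - a)"
  have t: "0 < t" "t < 1" "1 - b = t * (1 - a)" using assms False by (auto simp: t_def)
  have "transport_gain a u v = t * (hdist H w u v - lazy_transport a u v) / (1 - b)"
    using t by (simp add: transport_gain_def)
  also have "\<dots> \<le> (hdist H w u v - lazy_transport b u v) / (1 - b)"
    using lazy_transport_convex[OF assms(1-3) _ t] assms by (intro divide_right_mono) (auto simp: algebra_simps)
  finally show ?thesis by (simp add: transport_gain_def)
qed simp

lemma transport_gain_superadditive:
  assumes "u \<in> V" "y \<in> V" "v \<in> V" "0 \<le> \<alpha>" "\<alpha> < 1"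
    and "hdist H w u v = hdist H w u y + hdist H w y v"
  shows "transport_gain \<alpha> u y + transport_gain \<alpha> y v \<le> transport_gain \<alpha> u v"
proof -
  have "lazy_transport \<alpha> u v \<le> lazy_transport \<alpha> u y + lazy_transport \<alpha> y v"
    unfolding wasserstein_eq_optimal_transport
    using assms by (intro optimal_transport_triangle prob_on_hmu) auto
  then show ?thesis
    using assms by (simp add: transport_gain_def add_divide_distrib[symmetric] divide_right_mono)
qed

text \<open>Monotonicity in the laziness parameter is what makes the limit defining the curvature exist.\<close>
lemma transport_gain_tendsto:
  assumes "u \<in> V" "v \<in> V" "u \<noteq> v"
  shows "((\<lambda>\<alpha>. transport_gain \<alpha> u v) \<longlongrightarrow> llycurv V H w u v * hdist H w u v) (at_left 1)"
proof -
  let ?g = "\<lambda>\<alpha>. transport_gain \<alpha> u v"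
  have "(?g \<longlongrightarrow> Sup (?g ` ({..<1} \<inter> {0..}))) (at 1 within {..<1} \<inter> {0..})"
    using assms
    by (intro Lim_left_bound[where K = "2 * Max (w ` H)"] transport_gain_mono transport_gain_le) auto
  moreover have "at 1 within {..<1} \<inter> {0..} = at_left (1::real)"
    by (rule at_within_nhd[of _ "{0<..}"]) auto
  ultimately obtain L where L: "(?g \<longlongrightarrow> L) (at_left 1)" by auto
  then have "((\<lambda>\<alpha>. kappa_alpha V H w \<alpha> u v / (1 - \<alpha>)) \<longlongrightarrow> L / hdist H w u v) (at_left 1)"
    unfolding kappa_alpha_div_eq[OF assms] using hdist_pos[OF assms] by (intro tendsto_divide) auto
  then have "llycurv V H w u v = L / hdist H w u v"
    unfolding llycurv_def by (rule tendsto_Lim[rotated]) simp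
  with L show ?thesis using hdist_pos[OF assms] by simp
qed

lemma llycurv_mult_hdist_le:
  assumes "u \<in> V" "v \<in> V" "u \<noteq> v"
  shows "llycurv V H w u v * hdist H w u v \<le> 2 * Max (w ` H)"
  using eventually_laziness
  by (intro tendsto_upperbound[OF transport_gain_tendsto[OF assms]])
    (auto elim!: eventually_mono intro: transport_gain_le assms)

lemma llycurv_mult_hdist_superadditive:
  assumes "u \<in> V" "y \<in> V" "v \<in> V" "u \<noteq> y" "y \<noteq> v" "u \<noteq> v"
    and "hdist H w u v = hdist H w u y + hdist H w y v"
  shows "llycurv V H w u y * hdist H w u y + llycurv V H w y v * hdist H w y v
    \<le> llycurv V H w u v * hdist H w u v"
  using eventually_laziness assms
  by (intro tendsto_le[OF _ transport_gain_tendsto tendsto_add[OF transport_gain_tendsto transport_gain_tendsto]])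
    (auto elim!: eventually_mono intro: transport_gain_superadditive)

lemma llycurv_ge_of_split:
  assumes "u \<in> V" "y \<in> V" "v \<in> V" "u \<noteq> y" "y \<noteq> v" "u \<noteq> v"
    and split: "hdist H w u v = hdist H w u y + hdist H w y v"
    and "\<kappa> \<le> llycurv V H w u y" "\<kappa> \<le> llycurv V H w y v"
  shows "\<kappa> \<le> llycurv V H w u v"
proof -
  have pos: "0 < hdist H w u y" "0 < hdist H w y v" "0 < hdist H w u v"
    using hdist_pos assms(1-6) by auto
  have "\<kappa> * hdist H w u v = \<kappa> * hdist H w u y + \<kappa> * hdist H w y v"
    using split by (simp add: distrib_left)
  also have "\<dots> \<le> llycurv V H w u y * hdist H w u y + llycurv V H w y v * hdist H w y v"
    using assms(8,9) pos by (intro add_mono mult_right_mono) auto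
  also have "\<dots> \<le> llycurv V H w u v * hdist H w u v"
    using llycurv_mult_hdist_superadditive[OF assms(1-7)] .
  finally show ?thesis using pos(3) by simp
qed

lemma llycurv_ge_of_well_transported:
  assumes wt: "\<forall>u\<in>V. \<forall>v\<in>V. well_transported H w u v \<longrightarrow> \<kappa> \<le> llycurv V H w u v"
    and "u \<in> V" "v \<in> V" "u \<noteq> v"
  shows "\<kappa> \<le> llycurv V H w u v"
proof -
  obtain hs where "hyperpath H hs u v" "sum_list (map w hs) = hdist H w u v"
    using hdist_attained assms(2-4) .
  then show ?thesis using assms(2-4)
  proof (induction hs arbitrary: u)
    case Nil
    then show ?case by (simp add: hyperpath_def)
  next
    case (Cons h hs)
    have "h \<in> H" "u \<in> h" using Cons.prems(1) unfolding hyperpath_def by auto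
    show ?case
    proof (cases "hs = []")
      case True
      then have "well_transported H w u v"
        using Cons.prems \<open>h \<in> H\<close> \<open>u \<in> h\<close> unfolding well_transported_def hyperpath_def by auto
      then show ?thesis using wt Cons.prems by blast
    next
      case False
      obtain y where "y \<in> h" "y \<in> V" "y \<noteq> u" "y \<noteq> v" "hyperpath H hs y v"
        and uy: "hdist H w u y = w h" and yv: "hdist H w y v = sum_list (map w hs)"
        by (rule geodesic_Cons[OF Cons.prems(1) False Cons.prems(2)])
      have "hdist H w u v = hdist H w u y + hdist H w y v"
        using uy yv Cons.prems(2) by simp
      moreover have "well_transported H w u y"
        using \<open>h \<in> H\<close> \<open>u \<in> h\<close> \<open>y \<in> h\<close> \<open>y \<noteq> u\<close> uy unfolding well_transported_def by auto
      then have "\<kappa> \<le> llycurv V H w u y" using wt \<open>y \<in> V\<close> Cons.prems(3) by blast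
      moreover have "\<kappa> \<le> llycurv V H w y v"
        using Cons.IH \<open>hyperpath H hs y v\<close> yv \<open>y \<in> V\<close> Cons.prems \<open>y \<noteq> v\<close> by simp
      ultimately show ?thesis
        by (rule llycurv_ge_of_split[OF Cons.prems(3) \<open>y \<in> V\<close> Cons.prems(4)
              not_sym[OF \<open>y \<noteq> u\<close>] \<open>y \<noteq> v\<close> Cons.prems(5)])
    qed
  qed
qed

lemma hdist_le_div_llycurv:
  assumes "u \<in> V" "v \<in> V" "u \<noteq> v" "0 < llycurv V H w u v"
  shows "hdist H w u v \<le> 2 * Max (w ` H) / llycurv V H w u v"
  using llycurv_mult_hdist_le[OF assms(1-3)] assms(4) by (simp add: le_divide_eq mult.commute)

lemma hdiam_le_of_well_transported:
  assumes "0 < \<kappa>" and wt: "\<forall>u\<in>V. \<forall>v\<in>V. well_transported H w u v \<longrightarrow> \<kappa> \<le> llycurv V H w u v"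
  shows "hdiam V H w \<le> 2 * Max (w ` H) / \<kappa>"
proof (rule hdiam_le)
  obtain h where "h \<in> H" using edges_nonempty by blast
  then have "h \<noteq> {}" using edge_card[of h] by auto
  with \<open>h \<in> H\<close> show "V \<noteq> {}" using edge_subset by blast
  fix u v assume "u \<in> V" "v \<in> V"
  show "hdist H w u v \<le> 2 * Max (w ` H) / \<kappa>"
  proof (cases "u = v")
    case False
    then have "\<kappa> \<le> llycurv V H w u v"
      using llycurv_ge_of_well_transported[OF wt] \<open>u \<in> V\<close> \<open>v \<in> V\<close> by blast
    then have "2 * Max (w ` H) / llycurv V H w u v \<le> 2 * Max (w ` H) / \<kappa>"
      using \<open>0 < \<kappa>\<close> max_weight_pos by (intro divide_left_mono mult_pos_pos) auto
    moreover have "hdist H w u v \<le> 2 * Max (w ` H) / llycurv V H w u v"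
      using hdist_le_div_llycurv \<open>u \<in> V\<close> \<open>v \<in> V\<close> False \<open>0 < \<kappa>\<close> \<open>\<kappa> \<le> llycurv V H w u v\<close> by simp
    ultimately show ?thesis by linarith
  qed (use \<open>0 < \<kappa>\<close> max_weight_pos in simp)
qed

end

theorem mainTheorem4:
  fixes V :: "'a set" and H :: "'a set set" and w :: "'a set \<Rightarrow> real"
  assumes "hypergraph V H w"
    and "hconnected V H"
    and "H \<noteq> {}"
    and "\<forall>h\<in>H. card h \<ge> 2"
  shows "(\<forall>u\<in>V. \<forall>v\<in>V. u \<noteq> v \<longrightarrow> llycurv V H w u v > 0 \<longrightarrow>
            hdist H w u v \<le> 2 * Max (w ` H) / llycurv V H w u v)
       \<and> (\<forall>\<kappa>::real. \<kappa> > 0 \<longrightarrow>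
            (\<forall>u\<in>V. \<forall>v\<in>V. well_transported H w u v \<longrightarrow> llycurv V H w u v \<ge> \<kappa>) \<longrightarrow>
            hdiam V H w \<le> 2 * Max (w ` H) / \<kappa>)"
proof -
  interpret nondegenerate_hypergraph V H w
    using assms by unfold_locales auto
  show ?thesis
  proof (intro conjI ballI allI impI)
    fix u v assume "u \<in> V" "v \<in> V" "u \<noteq> v" "0 < llycurv V H w u v"
    then show "hdist H w u v \<le> 2 * Max (w ` H) / llycurv V H w u v" by (rule hdist_le_div_llycurv)
  next
    fix \<kappa> :: real
    assume "0 < \<kappa>" "\<forall>u\<in>V. \<forall>v\<in>V. well_transported H w u v \<longrightarrow> \<kappa> \<le> llycurv V H w u v"
    then show "hdiam V H w \<le> 2 * Max (w ` H) / \<kappa>" by (rule hdiam_le_of_well_transported)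
  qed
qed

end
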